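(* Let $g\ge 2$ and $d\ge 1$ be integers with $d>2^{g-1}$. Let $\tau_g\in\mathbb{C}$ with $\operatorname{Im}\tau_g>0$, let $\tau_{ij}=\tau_{ji}\in\mathbb{C}$ for $1\le i<j\le g-1$ be arbitrary, and let $\tau_{1g},\ldots,\tau_{g-1,g}\in\mathbb{C}$ be such that the images $a_1,\ldots,a_{g-1}$ of $\tau_{1g},\ldots,\tau_{g-1,g}$ in the elliptic curve $E=\mathbb{C}/(\mathbb{Z}d+\mathbb{Z}\tau_g)$ are linearly independent over $\mathbb{Z}$. Let $S=\{0,1\}^{g-1}$ and for $q\in S$ put $c_q=\prod_{1\le i<j\le g-1} \mathbf{e}(\tau_{ij})^{q_iq_j}$. For $k\in\mathbb{Z}/d\mathbb{Z}$ define, for $z\in\mathbb{C}$ and homogeneous coordinates $([u_1:v_1],\ldots,[u_{g-1}:v_{g-1}])\in(\mathbb{P}^1)^{g-1}$, \[ F_k(z;u,v)=\sum_{q\in S} c_q\,\vartheta_k\Big(\tau_g,\ z+\sum_{i=1}^{g-1}q_i\tau_{ig}\Big)\prod_{i=1}^{g-1}u_i^{q_i}v_i^{1-q_i}. \] Then $F_0,\ldots,F_{d-1}$ have no common zero on $\mathbb{C}\times(\mathbb{P}^1)^{g-1}$.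
   Context: $\mathbf{e}(x)=e^{2\pi i x}$. For $\tau$ in the upper half plane, $z\in\mathbb{C}$ and $k\in\mathbb{Z}/d\mathbb{Z}$, $\vartheta_k(\tau,z)=\sum_{n\in\mathbb{Z}}\mathbf{e}\big(\tfrac12(n+k/d)^2\tau+(n+k/d)z\big)$ (this depends only on the class of $k$ modulo $d$). Each $F_k$ is multihomogeneous of degree $(1,\ldots,1)$ in the $(u_i,v_i)$, so its vanishing at a point of $\mathbb{C}\times(\mathbb{P}^1)^{g-1}$ is well defined; in the affine coordinate $w_i=u_i/v_i$ it reads $\sum_{q\in S}c_q\vartheta_k(\tau_g,z+\sum_i q_i\tau_{ig})\prod_i w_i^{q_i}$. *)

theory Defs
  imports "HOL-Analysis.Analysis"
begin

definition ee :: "complex \<Rightarrow> complex" where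
  "ee x = exp (2 * of_real pi * \<i> * x)"

definition theta :: "nat \<Rightarrow> int \<Rightarrow> complex \<Rightarrow> complex \<Rightarrow> complex" where
  "theta d k tau z = (\<Sum>\<^sub>\<infinity> n::int.
      ee ((1/2) * (of_int n + of_int k / of_nat d)^2 * tau + (of_int n + of_int k / of_nat d) * z))"

definition lattice :: "nat \<Rightarrow> complex \<Rightarrow> complex set" where
  "lattice d tau = {of_int m * of_nat d + of_int n * tau | m n :: int. True}"

definition Sset :: "nat \<Rightarrow> (nat \<Rightarrow> nat) set" where
  "Sset g = PiE {1..g-1} (\<lambda>_. {0,1})"

definition cq :: "nat \<Rightarrow> (nat \<Rightarrow> nat \<Rightarrow> complex) \<Rightarrow> (nat \<Rightarrow> nat) \<Rightarrow> complex" where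
  "cq g T q = (\<Prod>(i,j)\<in>{(i,j). 1 \<le> i \<and> i < j \<and> j \<le> g-1}. ee (T i j) ^ (q i * q j))"

text \<open>F_k(z;u,v); tg = tau_g, T i j = tau_ij, t i = tau_{ig}\<close>
definition Fk :: "nat \<Rightarrow> nat \<Rightarrow> complex \<Rightarrow> (nat \<Rightarrow> nat \<Rightarrow> complex) \<Rightarrow> (nat \<Rightarrow> complex)
     \<Rightarrow> int \<Rightarrow> complex \<Rightarrow> (nat \<Rightarrow> complex) \<Rightarrow> (nat \<Rightarrow> complex) \<Rightarrow> complex" where
  "Fk g d tg T t k z u v = (\<Sum>q\<in>Sset g. cq g T q *
      theta d k tg (z + (\<Sum>i=1..g-1. of_nat (q i) * t i)) *
      (\<Prod>i=1..g-1. u i ^ q i * v i ^ (1 - q i)))"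

end

(*
  Write theta_level d tau l alpha for the theta function
    z |-> sum over M in Z of e((alpha + l M)^2 tau / (2 d l) + (alpha + l M) z / d)
  of level l and characteristic alpha (taken modulo l), so that vartheta_k = theta_level d tau d k.
  Completing the square shows that the product of a level-l and a level-1 function is a combination
  of level-(l+1) functions whose characteristics add up.  Hence a product of d level-1 functions whose
  characteristics sum to 0 is a linear combination of vartheta_0, ..., vartheta_(d-1).

  A level-1 function is, up to a nowhere vanishing factor, Jacobi's theta function, whose zeros are
  exactly the lattice translates of the half period (1 + tau)/2: the argument principle on a period
  rectangle, with the quasi-periodicity of the logarithmic derivative, counts exactly one zero there.
  So, given fewer than d points pairwise incongruent modulo Z d + Z tau, some product as above
  vanishes at all of them but one and not at that one: evaluations of vartheta_0, ..., vartheta_(d-1)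
  at such points are linearly independent.

  A common zero of the F_k is a linear relation, with coefficients
  lambda_q = c_q prod_i u_i^(q_i) v_i^(1 - q_i), between the evaluations at the 2^(g-1) < d points
  z + sum_i q_i tau_ig, q in S, which are pairwise incongruent by the independence of the a_i.
  So every lambda_q vanishes, but the coefficient of a suitable monomial does not.
*)

theory Submission
  imports Defs "HOL-Complex_Analysis.Complex_Analysis"
begin

section \<open>Gaussian sums over the integers\<close>

lemma ee_add: "ee (a + b) = ee a * ee b"
  by (simp add: ee_def distrib_left exp_add)

lemma ee_nonzero [simp]: "ee x \<noteq> 0"
  by (simp add: ee_def)

lemma norm_ee: "norm (ee x) = exp (-2 * pi * Im x)"
  by (simp add: ee_def norm_exp_eq_Re)

lemma ee_of_int [simp]: "ee (of_int n) = 1"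
  unfolding ee_def using exp_integer_2pi[of "real_of_int n"]
  by (simp add: mult.commute mult.left_commute)

lemma ee_add_of_int: "ee (x + of_int n) = ee x"
  by (simp add: ee_add)

lemma summable_on_exp_neg_abs_int: "(\<lambda>M::int. exp (- real_of_int \<bar>M\<bar>)) summable_on UNIV"
proof -
  have "summable (\<lambda>n::nat. exp (-1::real) ^ n)"
    by (rule summable_geometric) simp
  hence geom: "(\<lambda>n::nat. exp (- real n)) summable_on UNIV"
    by (subst summable_on_UNIV_nonneg_real_iff) (simp_all flip: exp_of_nat_mult)
  have "(\<lambda>M::int. exp (- real_of_int \<bar>M\<bar>)) summable_on range f"
    if "f = int \<or> f = (\<lambda>n. - int n)" for f
    using that geom by (subst summable_on_reindex) (auto simp: o_def inj_on_def)
  moreover have "(UNIV :: int set) = range int \<union> range (\<lambda>n. - int n)"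
    by (auto intro: int_cases2)
  ultimately show ?thesis
    by (metis summable_on_union)
qed

lemma summable_on_exp_gaussian_int:
  fixes a b :: real
  assumes "a > 0"
  shows "(\<lambda>M::int. exp (- a * of_int M ^ 2 + b * of_int \<bar>M\<bar>)) summable_on UNIV"
proof (rule summable_on_comparison_test)
  define K where "K = (\<bar>b\<bar> + 1)^2 / (4*a)"
  show "(\<lambda>M::int. exp K * exp (- real_of_int \<bar>M\<bar>)) summable_on UNIV"
    by (intro summable_on_cmult_right summable_on_exp_neg_abs_int)
  show "exp (- a * of_int M ^ 2 + b * of_int \<bar>M\<bar>) \<le> exp K * exp (- real_of_int \<bar>M\<bar>)" for M :: int
  proof -
    define x where "x = \<bar>real_of_int M\<bar>"
    \<comment> \<open>completing the square: \<open>(|b| + 1) x - a x\<^sup>2 \<le> K\<close>\<close>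
    have "0 \<le> (2*a*x - (\<bar>b\<bar> + 1))^2 / (4*a)"
      using assms by simp
    also have "\<dots> = K - ((\<bar>b\<bar> + 1) * x - a * x^2)"
      using assms by (simp add: K_def field_simps power2_eq_square)
    moreover have "b * x \<le> \<bar>b\<bar> * x"
      by (simp add: x_def mult_right_mono)
    ultimately have "- a * x^2 + b * x \<le> K - x"
      by (simp add: algebra_simps)
    thus ?thesis
      by (simp add: x_def flip: exp_add)
  qed
qed simp

lemma summable_on_norm_ee_quadratic:
  fixes A B C :: complex
  assumes "Im A > 0"
  shows "(\<lambda>M::int. norm (ee (A * of_int M ^ 2 + B * of_int M + C))) summable_on UNIV"
proof (rule summable_on_comparison_test)
  show "(\<lambda>M::int. exp (-2*pi*Im C) * exp (- (2*pi*Im A) * of_int M ^ 2 + (2*pi*\<bar>Im B\<bar>) * of_int \<bar>M\<bar>))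
      summable_on UNIV"
    using assms by (intro summable_on_cmult_right summable_on_exp_gaussian_int) simp
  show "norm (ee (A * of_int M ^ 2 + B * of_int M + C))
      \<le> exp (-2*pi*Im C) * exp (- (2*pi*Im A) * of_int M ^ 2 + (2*pi*\<bar>Im B\<bar>) * of_int \<bar>M\<bar>)" for M :: int
  proof -
    have "- (Im B * of_int M) \<le> \<bar>Im B\<bar> * of_int \<bar>M\<bar>"
      by (metis abs_ge_minus_self abs_mult of_int_abs)
    hence "pi * - (Im B * of_int M) \<le> pi * (\<bar>Im B\<bar> * of_int \<bar>M\<bar>)"
      by (intro mult_left_mono) auto
    hence "-2*pi*Im (A * of_int M ^ 2 + B * of_int M + C)
        \<le> -2*pi*Im C + (- (2*pi*Im A) * of_int M ^ 2 + (2*pi*\<bar>Im B\<bar>) * of_int \<bar>M\<bar>)"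
      by (simp add: algebra_simps power2_eq_square)
    thus ?thesis
      by (simp add: norm_ee flip: exp_add)
  qed
qed simp

lemma infsum_mult_infsum:
  fixes f g :: "'a \<Rightarrow> complex"
  assumes f: "(\<lambda>x. norm (f x)) summable_on UNIV" and g: "(\<lambda>y. norm (g y)) summable_on UNIV"
  shows "(\<lambda>p. norm (f (fst p) * g (snd p))) summable_on UNIV"
    and "(\<Sum>\<^sub>\<infinity>x. f x) * (\<Sum>\<^sub>\<infinity>y. g y) = (\<Sum>\<^sub>\<infinity>p. f (fst p) * g (snd p))"
proof -
  have "(\<lambda>p. norm (f (fst p) * g (snd p))) summable_on UNIV \<times> UNIV"
    by (subst Infinite_Sum.abs_summable_on_Sigma_iff)
       (simp add: norm_mult infsum_cmult_right' summable_on_cmult_left summable_on_cmult_right f g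
          infsum_nonneg)
  thus abs: "(\<lambda>p. norm (f (fst p) * g (snd p))) summable_on UNIV"
    by simp
  have "(\<lambda>p. f (fst p) * g (snd p)) summable_on UNIV \<times> UNIV"
    using abs_summable_summable[OF abs] by simp
  from infsum_Sigma_banach[OF this]
  show "(\<Sum>\<^sub>\<infinity>x. f x) * (\<Sum>\<^sub>\<infinity>y. g y) = (\<Sum>\<^sub>\<infinity>p. f (fst p) * g (snd p))"
    by (simp add: infsum_cmult_right' infsum_cmult_left')
qed


section \<open>Theta functions with characteristics\<close>

definition theta_level_term :: "nat \<Rightarrow> complex \<Rightarrow> nat \<Rightarrow> complex \<Rightarrow> complex \<Rightarrow> int \<Rightarrow> complex" where
  "theta_level_term d \<tau> l \<alpha> z M = ee ((\<alpha> + of_nat l * of_int M)^2 * \<tau> / (2 * of_nat d * of_nat l)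
       + (\<alpha> + of_nat l * of_int M) * z / of_nat d)"

definition theta_level :: "nat \<Rightarrow> complex \<Rightarrow> nat \<Rightarrow> complex \<Rightarrow> complex \<Rightarrow> complex" where
  "theta_level d \<tau> l \<alpha> z = (\<Sum>\<^sub>\<infinity>M::int. theta_level_term d \<tau> l \<alpha> z M)"

lemma theta_eq_theta_level:
  assumes "d > 0"
  shows "theta d k \<tau> z = theta_level d \<tau> d (of_int k) z"
  unfolding theta_def theta_level_def theta_level_term_def
  using assms by (intro infsum_cong arg_cong[where f = ee]) (simp add: field_simps power2_eq_square)

lemma summable_on_norm_theta_level_term:
  assumes "d > 0" "l > 0" "Im \<tau> > 0"
  shows "(\<lambda>M. norm (theta_level_term d \<tau> l \<alpha> z M)) summable_on UNIV"
proof -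
  have "theta_level_term d \<tau> l \<alpha> z M = ee ((of_nat l * \<tau> / (2 * of_nat d)) * of_int M ^ 2
     + (\<alpha> * \<tau> / of_nat d + of_nat l * z / of_nat d) * of_int M
     + (\<alpha>^2 * \<tau> / (2 * of_nat d * of_nat l) + \<alpha> * z / of_nat d))" for M
    unfolding theta_level_term_def using assms
    by (intro arg_cong[where f = ee]) (simp add: field_simps power2_eq_square)
  moreover have "Im (of_nat l * \<tau> / (2 * of_nat d)) > 0"
    using assms by (simp add: Im_divide_of_nat)
  ultimately show ?thesis
    using summable_on_norm_ee_quadratic by presburger
qed

lemma theta_level_add_multiple:
  "theta_level d \<tau> l (\<alpha> + of_nat l * of_int n) z = theta_level d \<tau> l \<alpha> z"
  unfolding theta_level_def
  by (rule infsum_reindex_bij_witness[of UNIV "\<lambda>M. M - n" "\<lambda>M. M + n"])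
     (auto simp: theta_level_term_def algebra_simps)

lemma theta_level_mod:
  "theta_level d \<tau> l (\<alpha> + of_nat n) z = theta_level d \<tau> l (\<alpha> + of_nat (n mod l)) z"
proof -
  have "\<alpha> + of_nat n = (\<alpha> + of_nat (n mod l)) + of_nat l * of_int (int (n div l))"
    by (metis add.assoc mod_mult_div_eq of_int_of_nat_eq of_nat_add of_nat_mult)
  thus ?thesis
    by (simp only: theta_level_add_multiple)
qed

lemma ee_gaussian_product:
  fixes x y \<tau> z :: complex
  assumes "d > 0" "l > 0"
  shows "ee (x^2 * \<tau> / (2 * of_nat d * of_nat l) + x * z / of_nat d)
       * ee (y^2 * \<tau> / (2 * of_nat d * of_nat 1) + y * z / of_nat d)
     = ee ((x + y)^2 * \<tau> / (2 * of_nat d * of_nat (l + 1)) + (x + y) * z / of_nat d)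
       * ee ((x - of_nat l * y)^2 * \<tau> / (2 * of_nat d * of_nat (l * (l + 1)))
             + (x - of_nat l * y) * 0 / of_nat d)"
proof -
  define L D :: complex where "L = of_nat l" and "D = of_nat d"
  have nz: "L \<noteq> 0" "L + 1 \<noteq> 0" "D \<noteq> 0"
    using assms unfolding L_def D_def by (simp_all add: add.commute flip: of_nat_Suc)
  have "x^2 / L + y^2 = (x + y)^2 / (L + 1) + (x - L * y)^2 / (L * (L + 1))"
    using nz by (simp add: divide_simps) (simp add: power2_eq_square algebra_simps)
  hence "(x^2 / L + y^2) * (\<tau> / (2 * D)) + (x * z / D + y * z / D)
      = ((x + y)^2 / (L + 1) + (x - L * y)^2 / (L * (L + 1))) * (\<tau> / (2 * D)) + (x + y) * z / D"
    by (simp add: add_divide_distrib distrib_right)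
  thus ?thesis
    unfolding ee_add[symmetric] by (simp add: L_def D_def algebra_simps)
qed

lemma bij_betw_theta_product_index:
  "bij_betw (\<lambda>(j, R, M). (M + R, int j + R - int l * M)) ({..<l+1} \<times> UNIV) (UNIV :: (int \<times> int) set)"
proof -
  define inv where "inv = (\<lambda>(M', K'). let Q = int l * M' + K' in
    (nat (Q mod int (l+1)), Q div int (l+1), M' - Q div int (l+1)))"
  have "inv (M + R, int j + R - int l * M) = (j, R, M)" if "j < l + 1" for j R M
  proof -
    have Q: "int l * (M + R) + (int j + R - int l * M) = int j + int (l+1) * R"
      by (simp add: algebra_simps)
    have "(int j + int (l+1) * R) mod int (l+1) = int j" "(int j + int (l+1) * R) div int (l+1) = R"
      using that by simp_all
    thus ?thesis
      unfolding inv_def Let_def prod.case Q by simp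
  qed
  moreover have "(\<lambda>(j, R, M). (M + R, int j + R - int l * M)) (inv (M', K')) = (M', K')" for M' K'
  proof -
    define Q where "Q = int l * M' + K'"
    have "Q div int (l+1) * int (l+1) + Q mod int (l+1) = Q"
      by (rule div_mult_mod_eq)
    thus ?thesis
      by (simp add: inv_def Q_def[symmetric]) (simp add: Q_def algebra_simps)
  qed
  moreover have "inv y \<in> {..<l+1} \<times> UNIV" for y
    by (cases y) (simp add: inv_def Let_def nat_less_iff)
  ultimately show ?thesis
    by (intro bij_betw_byWitness[where f' = inv]) (auto simp: image_subset_iff)
qed

lemma theta_level_term_mult:
  assumes "d > 0" "l > 0"
  shows "theta_level_term d \<tau> l \<alpha> z (M + R) * theta_level_term d \<tau> 1 \<beta> z (int j + R - int l * M)
       = theta_level_term d \<tau> (l+1) (\<alpha> + \<beta> + of_nat j) z R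
         * theta_level_term d \<tau> (l*(l+1)) (\<alpha> - of_nat l * (\<beta> + of_nat j)) 0 M"
proof -
  define x y where "x = \<alpha> + of_nat l * of_int (M + R)"
    and "y = \<beta> + of_nat 1 * of_int (int j + R - int l * M)"
  have "x + y = (\<alpha> + \<beta> + of_nat j) + of_nat (l+1) * of_int R"
    "x - of_nat l * y = (\<alpha> - of_nat l * (\<beta> + of_nat j)) + of_nat (l*(l+1)) * of_int M"
    by (simp_all add: x_def y_def algebra_simps)
  with ee_gaussian_product[OF assms, of x \<tau> z y] show ?thesis
    by (simp only: theta_level_term_def x_def y_def)
qed

lemma theta_level_mult:
  assumes d: "d > 0" and l: "l > 0" and \<tau>: "Im \<tau> > 0"
  shows "theta_level d \<tau> l \<alpha> z * theta_level d \<tau> 1 \<beta> z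
       = (\<Sum>j<l+1. theta_level d \<tau> (l*(l+1)) (\<alpha> - of_nat l * (\<beta> + of_nat j)) 0
                    * theta_level d \<tau> (l+1) (\<alpha> + \<beta> + of_nat j) z)"
proof -
  define a b where "a = theta_level_term d \<tau> l \<alpha> z" and "b = theta_level_term d \<tau> 1 \<beta> z"
  define B where "B j = theta_level_term d \<tau> (l+1) (\<alpha> + \<beta> + of_nat j) z" for j
  define c where "c j = theta_level_term d \<tau> (l*(l+1)) (\<alpha> - of_nat l * (\<beta> + of_nat j)) 0" for j
  define h where "h = (\<lambda>(j, R, M). (M + R, int j + R - int l * M))"
  have bij: "bij_betw h ({..<l+1} \<times> UNIV) UNIV"
    unfolding h_def by (rule bij_betw_theta_product_index)
  have sa: "(\<lambda>M. norm (a M)) summable_on UNIV" and sb: "(\<lambda>M. norm (b M)) summable_on UNIV"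
    and sB: "(\<lambda>R. norm (B j R)) summable_on UNIV" and sc: "(\<lambda>M. norm (c j M)) summable_on UNIV" for j
    unfolding a_def b_def B_def c_def using assms by (auto intro: summable_on_norm_theta_level_term)
  have ab_h: "a (fst (h x)) * b (snd (h x)) = (case x of (j, R, M) \<Rightarrow> B j R * c j M)" for x
    using theta_level_term_mult[OF d l] by (auto simp: h_def a_def b_def B_def c_def split: prod.splits)
  have "(\<lambda>p. a (fst p) * b (snd p)) summable_on UNIV"
    by (rule abs_summable_summable[OF infsum_mult_infsum(1)[OF sa sb]])
  hence summable: "(\<lambda>(j, R, M). B j R * c j M) summable_on {..<l+1} \<times> UNIV"
    using summable_on_reindex_bij_betw[OF bij, of "\<lambda>p. a (fst p) * b (snd p)"] by (simp add: ab_h)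
  have "theta_level d \<tau> l \<alpha> z * theta_level d \<tau> 1 \<beta> z = (\<Sum>\<^sub>\<infinity>p. a (fst p) * b (snd p))"
    unfolding theta_level_def a_def[symmetric] b_def[symmetric] by (rule infsum_mult_infsum(2)[OF sa sb])
  also have "\<dots> = (\<Sum>\<^sub>\<infinity>x\<in>{..<l+1} \<times> UNIV. case x of (j, R, M) \<Rightarrow> B j R * c j M)"
    using infsum_reindex_bij_betw[OF bij, of "\<lambda>p. a (fst p) * b (snd p)"] by (simp add: ab_h)
  also have "\<dots> = (\<Sum>j<l+1. \<Sum>\<^sub>\<infinity>(R, M). B j R * c j M)"
    using infsum_Sigma_banach[OF summable] by simp
  also have "\<dots> = (\<Sum>j<l+1. theta_level d \<tau> (l*(l+1)) (\<alpha> - of_nat l * (\<beta> + of_nat j)) 0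
                    * theta_level d \<tau> (l+1) (\<alpha> + \<beta> + of_nat j) z)"
    unfolding theta_level_def B_def[symmetric] c_def[symmetric] case_prod_unfold
    by (simp add: infsum_mult_infsum(2)[OF sB sc] mult.commute)
  finally show ?thesis .
qed

definition theta_span :: "nat \<Rightarrow> complex \<Rightarrow> nat \<Rightarrow> complex \<Rightarrow> (complex \<Rightarrow> complex) set" where
  "theta_span d \<tau> l s = {f. \<exists>C. \<forall>z. f z = (\<Sum>j<l. C j * theta_level d \<tau> l (s + of_nat j) z)}"

lemma theta_level_in_theta_span:
  assumes "l > 0"
  shows "theta_level d \<tau> l (s + of_nat n) \<in> theta_span d \<tau> l s"
proof -
  have "{..<l} \<inter> {j. j = n mod l} = {n mod l}"
    using assms by auto
  hence "theta_level d \<tau> l (s + of_nat n) z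
      = (\<Sum>j<l. of_bool (j = n mod l) * theta_level d \<tau> l (s + of_nat j) z)" for z
    by (simp add: theta_level_mod[of d \<tau> l s n])
  thus ?thesis
    unfolding theta_span_def by (intro CollectI exI[of _ "\<lambda>j. of_bool (j = n mod l)"] allI)
qed

lemma theta_span_lincomb:
  assumes "finite A" and "\<And>i. i \<in> A \<Longrightarrow> f i \<in> theta_span d \<tau> l s"
  shows "(\<lambda>z. \<Sum>i\<in>A. c i * f i z) \<in> theta_span d \<tau> l s"
proof -
  have "\<forall>i\<in>A. \<exists>C. \<forall>z. f i z = (\<Sum>j<l. C j * theta_level d \<tau> l (s + of_nat j) z)"
    using assms(2) unfolding theta_span_def by blast
  then obtain C where C: "\<And>i z. i \<in> A \<Longrightarrow> f i z = (\<Sum>j<l. C i j * theta_level d \<tau> l (s + of_nat j) z)"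
    by metis
  have "(\<Sum>i\<in>A. c i * f i z) = (\<Sum>j<l. (\<Sum>i\<in>A. c i * C i j) * theta_level d \<tau> l (s + of_nat j) z)" for z
    by (simp add: C sum_distrib_left sum_distrib_right sum.swap[of _ A] mult.assoc)
  thus ?thesis
    unfolding theta_span_def by (intro CollectI exI[of _ "\<lambda>j. \<Sum>i\<in>A. c i * C i j"] allI)
qed

lemma theta_span_mult_theta_level_one:
  assumes "d > 0" "l > 0" "Im \<tau> > 0" and "f \<in> theta_span d \<tau> l s"
  shows "(\<lambda>z. f z * theta_level d \<tau> 1 \<beta> z) \<in> theta_span d \<tau> (l+1) (s + \<beta>)"
proof -
  obtain C where C: "\<And>z. f z = (\<Sum>j<l. C j * theta_level d \<tau> l (s + of_nat j) z)"
    using assms(4) unfolding theta_span_def by blast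
  define c where "c = (\<lambda>(j, i). C j * theta_level d \<tau> (l*(l+1)) (s + of_nat j - of_nat l * (\<beta> + of_nat i)) 0)"
  have "f z * theta_level d \<tau> 1 \<beta> z
      = (\<Sum>(j, i)\<in>{..<l} \<times> {..<l+1}. c (j, i) * theta_level d \<tau> (l+1) (s + \<beta> + of_nat (j + i)) z)" for z
  proof -
    have "f z * theta_level d \<tau> 1 \<beta> z
        = (\<Sum>j<l. C j * (theta_level d \<tau> l (s + of_nat j) z * theta_level d \<tau> 1 \<beta> z))"
      by (simp add: C sum_distrib_right mult.assoc)
    also have "\<dots> = (\<Sum>j<l. \<Sum>i<l+1. c (j, i) * theta_level d \<tau> (l+1) (s + \<beta> + of_nat (j + i)) z)"
      unfolding theta_level_mult[OF assms(1-3)] sum_distrib_left by (simp add: c_def mult.assoc add_ac)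
    finally show ?thesis
      by (simp only: sum.cartesian_product)
  qed
  moreover have "(\<lambda>z. \<Sum>(j, i)\<in>{..<l} \<times> {..<l+1}. c (j, i) * theta_level d \<tau> (l+1) (s + \<beta> + of_nat (j + i)) z)
      \<in> theta_span d \<tau> (l+1) (s + \<beta>)"
    unfolding case_prod_unfold
    by (rule theta_span_lincomb) (simp_all add: theta_level_in_theta_span del: of_nat_add)
  ultimately show ?thesis
    by simp
qed

lemma theta_span_mult_prod_theta_level_one:
  assumes "d > 0" "l > 0" "Im \<tau> > 0" "finite I" "f \<in> theta_span d \<tau> l s"
  shows "(\<lambda>z. f z * (\<Prod>i\<in>I. theta_level d \<tau> 1 (\<beta> i) z)) \<in> theta_span d \<tau> (l + card I) (s + (\<Sum>i\<in>I. \<beta> i))"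
  using assms(4)
proof (induction I rule: finite_induct)
  case empty
  show ?case
    using assms(5) by simp
next
  case (insert i I)
  from theta_span_mult_theta_level_one[OF assms(1) _ assms(3) insert.IH, of "\<beta> i"]
  show ?case
    using insert.hyps assms(2) by (simp add: add_ac mult_ac)
qed

lemma theta_span_eq_theta_combination:
  assumes "d > 0" "f \<in> theta_span d \<tau> d 0"
  obtains C where "\<And>z. f z = (\<Sum>k<d. C k * theta d (int k) \<tau> z)"
  using assms(2) theta_eq_theta_level[OF assms(1)] that unfolding theta_span_def by auto


section \<open>Quasi-periodic integrands and the argument principle on rectangles\<close>

lemma contour_integral_linepath_translate:
  "contour_integral (linepath (a + w) (b + w)) G = contour_integral (linepath a b) (\<lambda>z. G (z + w))"
  by (metis contour_integral_translate linepath_translate)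

lemma continuous_on_horizontal_segment:
  assumes "continuous_on {z. Im z = y} G" "Im a = y" "Im b = y"
  shows "continuous_on (closed_segment a b) G"
  by (rule continuous_on_subset[OF assms(1)]) (use assms(2,3) closed_segment_same_Im[of a b] in auto)

lemma contour_integral_unit_segment_shift:
  fixes G :: "complex \<Rightarrow> complex" and c :: real
  assumes per: "\<And>z. Im z = Im x \<Longrightarrow> G (z + 1) = G z"
    and cont: "continuous_on {z. Im z = Im x} G"
    and c: "0 \<le> c" "c \<le> 1"
  shows "contour_integral (linepath (x + c) (x + c + 1)) G = contour_integral (linepath x (x + 1)) G"
proof -
  have mem: "\<And>(w :: complex) r. 0 \<le> r \<Longrightarrow> r \<le> 1 \<Longrightarrow> w + of_real r \<in> closed_segment w (w + 1)"
    unfolding in_segment by (intro exI conjI) (auto simp: scaleR_conv_of_real algebra_simps)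
  have "contour_integral (linepath (x + 1) (x + c + 1)) G = contour_integral (linepath x (x + c)) G"
  proof -
    have "contour_integral (linepath (x + 1) (x + c + 1)) G = contour_integral (linepath x (x + c)) (\<lambda>z. G (z + 1))"
      using contour_integral_linepath_translate[of x 1 "x + c" G] by (simp add: add_ac)
    also have "\<dots> = contour_integral (linepath x (x + c)) G"
      by (rule contour_integral_cong) (auto simp: per closed_segment_same_Im)
    finally show ?thesis .
  qed
  moreover have "contour_integral (linepath (x + c) (x + c + 1)) G
      = contour_integral (linepath (x + c) (x + 1)) G + contour_integral (linepath (x + 1) (x + c + 1)) G"
    using mem[of "1 - c" "x + of_real c"] c
    by (intro contour_integral_split_linepath continuous_on_horizontal_segment[OF cont]) (auto simp: algebra_simps)
  moreover have "contour_integral (linepath x (x + 1)) G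
      = contour_integral (linepath x (x + c)) G + contour_integral (linepath (x + c) (x + 1)) G"
    using mem[of c x] c
    by (intro contour_integral_split_linepath continuous_on_horizontal_segment[OF cont]) auto
  ultimately show ?thesis
    by simp
qed

lemma contour_integral_unit_segment_quasiperiodic:
  fixes G :: "complex \<Rightarrow> complex" and t c :: complex and a y :: real
  assumes per: "\<And>z n. G (z + of_int n) = G z"
    and quasi: "\<And>z. Im z = y \<Longrightarrow> G (z + t) = G z + c"
    and line: "continuous_on {z. Im z = y} G"
  shows "contour_integral (linepath (Complex a (y + Im t)) (Complex a (y + Im t) + 1)) G
       = contour_integral (linepath (Complex a y) (Complex a y + 1)) G + c"
proof -
  \<comment> \<open>the top segment is an integer translate of the \<open>t\<close>-translate of a bottom segment\<close>
  define N where "N = \<lceil>Re t\<rceil>"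
  define p where "p = Complex a y + of_real (of_int N - Re t)"
  have p: "Im p = y" "Complex a (y + Im t) = p + t + of_int (- N)"
    by (simp_all add: p_def complex_eq_iff)
  have shift_N: "(\<lambda>z. G (z + of_int (- N))) = G"
    by (rule ext) (rule per)
  have "contour_integral (linepath (Complex a (y + Im t)) (Complex a (y + Im t) + 1)) G
      = contour_integral (linepath (p + t + of_int (- N)) (p + t + 1 + of_int (- N))) G"
    by (simp add: p(2) add_ac)
  also have "\<dots> = contour_integral (linepath (p + t) (p + t + 1)) G"
    by (subst contour_integral_linepath_translate) (simp only: shift_N)
  also have "\<dots> = contour_integral (linepath p (p + 1)) (\<lambda>z. G (z + t))"
    using contour_integral_linepath_translate[of p t "p + 1" G] by (simp add: add_ac)
  also have "\<dots> = contour_integral (linepath p (p + 1)) (\<lambda>z. G z + c)"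
    by (rule contour_integral_cong) (auto simp: quasi closed_segment_same_Im p(1))
  also have "\<dots> = contour_integral (linepath p (p + 1)) G + c"
    using continuous_on_horizontal_segment[OF line, of p "p + 1"] p(1)
    by (subst contour_integral_add) (auto intro: contour_integrable_continuous_linepath)
  also have "contour_integral (linepath p (p + 1)) G = contour_integral (linepath (Complex a y) (Complex a y + 1)) G"
    unfolding p_def using line per[of _ 1]
    by (intro contour_integral_unit_segment_shift) (simp_all add: N_def, linarith+)
  finally show ?thesis .
qed

lemma contour_integral_rectpath_quasiperiodic:
  fixes G :: "complex \<Rightarrow> complex" and t c :: complex and a y :: real
  defines "R \<equiv> rectpath (Complex a y) (Complex (a + 1) (y + Im t))"
  assumes per: "\<And>z n. G (z + of_int n) = G z"
    and quasi: "\<And>z. Im z = y \<Longrightarrow> G (z + t) = G z + c"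
    and cont: "continuous_on ({z. Im z = y} \<union> path_image R) G"
  shows "contour_integral R G = - c"
proof -
  define a1 a4 where "a1 = Complex a y" and "a4 = Complex a (y + Im t)"
  have R: "R = linepath a1 (a1 + 1) +++ linepath (a1 + 1) (a4 + 1) +++ linepath (a4 + 1) a4 +++ linepath a4 a1"
  proof -
    have "a1 + 1 = Complex (a + 1) y" "a4 + 1 = Complex (a + 1) (y + Im t)"
      by (simp_all add: a1_def a4_def complex_eq_iff)
    thus ?thesis
      by (simp add: R_def rectpath_def Let_def a1_def a4_def)
  qed
  have "path_image R = closed_segment a1 (a1 + 1) \<union> closed_segment (a1 + 1) (a4 + 1)
      \<union> closed_segment (a4 + 1) a4 \<union> closed_segment a4 a1"
    unfolding R by (simp add: path_image_join Un_assoc)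
  hence "G contour_integrable_on linepath a1 (a1 + 1)" "G contour_integrable_on linepath (a1 + 1) (a4 + 1)"
    "G contour_integrable_on linepath (a4 + 1) a4" "G contour_integrable_on linepath a4 a1"
    by (auto intro!: contour_integrable_continuous_linepath continuous_on_subset[OF cont])
  hence "contour_integral R G = contour_integral (linepath a1 (a1 + 1)) G
      + contour_integral (linepath (a1 + 1) (a4 + 1)) G
      + contour_integral (linepath (a4 + 1) a4) G + contour_integral (linepath a4 a1) G"
    unfolding R by (simp add: contour_integrable_joinI add.assoc)
  moreover have "contour_integral (linepath (a1 + 1) (a4 + 1)) G = contour_integral (linepath a1 a4) G"
    using per[of _ 1] by (simp add: contour_integral_linepath_translate)
  moreover have "contour_integral (linepath a4 (a4 + 1)) G = contour_integral (linepath a1 (a1 + 1)) G + c"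
    unfolding a1_def a4_def using per quasi continuous_on_subset[OF cont]
    by (intro contour_integral_unit_segment_quasiperiodic) auto
  ultimately show ?thesis
    using contour_integral_reversepath[of "linepath a1 a4" G] contour_integral_reversepath[of "linepath a4 (a4 + 1)" G]
    by simp
qed

lemma argument_principle_rectpath:
  fixes f :: "complex \<Rightarrow> complex"
  assumes holo: "f holomorphic_on UNIV" and nc: "\<not> f constant_on UNIV"
    and le: "Re a \<le> Re b" "Im a \<le> Im b"
    and bdry: "\<And>z. z \<in> path_image (rectpath a b) \<Longrightarrow> f z \<noteq> 0"
  shows "finite {p\<in>box a b. f p = 0}"
    and "contour_integral (rectpath a b) (\<lambda>z. deriv f z / f z)
           = 2 * pi * \<i> * (\<Sum>p\<in>{p\<in>box a b. f p = 0}. of_int (zorder f p))"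
proof -
  define S where "S = box (a - (1 + \<i>)) (b + (1 + \<i>))"
  define Z where "Z = {w\<in>S. f w = 0 \<or> w \<in> {}}"
  have cbox_S: "cbox a b \<subseteq> S"
    unfolding S_def by (auto simp: in_box_complex_iff in_cbox_complex_iff)
  have "Z \<subseteq> {z\<in>cbox (a - (1 + \<i>)) (b + (1 + \<i>)). f z = 0}"
    unfolding Z_def S_def using box_subset_cbox by auto
  moreover have "finite {z\<in>cbox (a - (1 + \<i>)) (b + (1 + \<i>)). f z = 0}"
    by (rule holomorphic_compact_finite_zeros[OF holo open_UNIV connected_UNIV compact_cbox _ nc]) simp
  ultimately have fin: "finite Z"
    by (rule finite_subset)
  have box_Z: "{p\<in>box a b. f p = 0} = Z \<inter> box a b"
    unfolding Z_def using cbox_S box_subset_cbox by auto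
  show "finite {p\<in>box a b. f p = 0}"
    unfolding box_Z using fin by simp
  have "path_image (rectpath a b) \<subseteq> S - Z"
    using bdry path_image_rectpath_subset_cbox[OF le] cbox_S unfolding Z_def by blast
  moreover have "winding_number (rectpath a b) z = 0" if "z \<notin> S" for z
    using winding_number_rectpath_outside[OF le] cbox_S that by blast
  ultimately have "contour_integral (rectpath a b) (\<lambda>z. deriv f z * 1 / f z)
      = 2 * pi * \<i> * (\<Sum>p\<in>Z. winding_number (rectpath a b) p * 1 * zorder f p)"
    unfolding Z_def using fin
    by (intro argument_principle) (auto simp: S_def Z_def convex_connected intro: holomorphic_on_subset[OF holo])
  moreover have "winding_number (rectpath a b) p = of_bool (p \<in> box a b)" if "p \<in> Z" for p
  proof (cases "p \<in> box a b")
    case False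
    have "p \<notin> path_image (rectpath a b)"
      using that bdry unfolding Z_def by blast
    hence "p \<notin> cbox a b"
      using False path_image_rectpath_cbox_minus_box[OF le] by blast
    thus ?thesis
      using winding_number_rectpath_outside[OF le] False by simp
  qed (simp add: winding_number_rectpath)
  ultimately show "contour_integral (rectpath a b) (\<lambda>z. deriv f z / f z)
      = 2 * pi * \<i> * (\<Sum>p\<in>{p\<in>box a b. f p = 0}. of_int (zorder f p))"
    using fin by (simp add: box_Z sum.inter_restrict Int_commute cong: sum.cong)
qed

lemma zorder_pos_entire:
  assumes "f holomorphic_on UNIV" "\<not> f constant_on UNIV" "f p = 0"
  shows "zorder f p > 0"
proof -
  obtain b where "f b \<noteq> 0"
    using assms(2,3) unfolding constant_on_def by metis
  hence "\<forall>\<^sub>F w in at p. f w \<noteq> 0"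
    using non_zero_neighbour_alt[OF assms(1) open_UNIV connected_UNIV UNIV_I UNIV_I] by simp
  thus ?thesis
    using zorder_pos_iff[OF assms(1) open_UNIV UNIV_I] assms(3) eventually_frequently by force
qed


section \<open>Zeros of the Jacobi theta function\<close>

definition jacobi_theta :: "complex \<Rightarrow> complex \<Rightarrow> complex" where
  "jacobi_theta t u = (\<Sum>\<^sub>\<infinity>K::int. ee (of_int K ^ 2 * t / 2 + of_int K * u))"

lemma jacobi_theta_lattice_shift:
  "jacobi_theta t (u + of_int m + of_int n * t) = ee (- of_int n * u - of_int n ^ 2 * t / 2) * jacobi_theta t u"
proof -
  define c where "c = ee (- of_int n * u - of_int n ^ 2 * t / 2)"
  have "ee (of_int K ^ 2 * t / 2 + of_int K * (u + of_int m + of_int n * t))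
      = c * ee (of_int (K + n) ^ 2 * t / 2 + of_int (K + n) * u)" for K
  proof -
    have "of_int K ^ 2 * t / 2 + of_int K * (u + of_int m + of_int n * t)
        = (- of_int n * u - of_int n ^ 2 * t / 2) + (of_int (K + n) ^ 2 * t / 2 + of_int (K + n) * u)
          + of_int (K * m)"
      by (simp add: field_simps power2_eq_square)
    thus ?thesis
      by (simp only: ee_add_of_int) (simp only: c_def ee_add)
  qed
  hence "jacobi_theta t (u + of_int m + of_int n * t) = (\<Sum>\<^sub>\<infinity>K. c * ee (of_int (K + n) ^ 2 * t / 2 + of_int (K + n) * u))"
    unfolding jacobi_theta_def by simp
  also have "\<dots> = c * (\<Sum>\<^sub>\<infinity>K. ee (of_int (K + n) ^ 2 * t / 2 + of_int (K + n) * u))"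
    by (rule infsum_cmult_right')
  also have "(\<Sum>\<^sub>\<infinity>K. ee (of_int (K + n) ^ 2 * t / 2 + of_int (K + n) * u)) = jacobi_theta t u"
    unfolding jacobi_theta_def by (rule infsum_reindex_bij_witness[of UNIV "\<lambda>K. K - n" "\<lambda>K. K + n"]) auto
  finally show ?thesis
    by (simp add: c_def)
qed

lemma jacobi_theta_add_of_int: "jacobi_theta t (u + of_int m) = jacobi_theta t u"
  using jacobi_theta_lattice_shift[of t u m 0] by (simp add: ee_def)

lemma jacobi_theta_add_period: "jacobi_theta t (u + t) = ee (- u - t / 2) * jacobi_theta t u"
  using jacobi_theta_lattice_shift[of t u 0 1] by simp

lemma jacobi_theta_lattice_shift_eq_0_iff:
  "jacobi_theta t (u + of_int m + of_int n * t) = 0 \<longleftrightarrow> jacobi_theta t u = 0"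
  by (simp add: jacobi_theta_lattice_shift)

lemma jacobi_theta_half_period: "jacobi_theta t ((1 + t) / 2) = 0"
proof -
  define w where "w = (1 + t) / 2"
  define a where "a K = ee (of_int K ^ 2 * t / 2 + of_int K * w)" for K :: int
  \<comment> \<open>the terms of index \<open>K\<close> and \<open>-1 - K\<close> cancel\<close>
  have "a (- 1 - K) = - a K" for K
  proof -
    have "of_int (- 1 - K) ^ 2 * t / 2 + of_int (- 1 - K) * w
        = (of_int K ^ 2 * t / 2 + of_int K * w) + 1 / 2 + of_int (- K - 1)"
      by (simp add: w_def field_simps power2_eq_square)
    thus ?thesis
      by (simp only: a_def ee_add_of_int ee_add[of _ "1/2"]) (simp add: ee_def)
  qed
  hence "jacobi_theta t w = (\<Sum>\<^sub>\<infinity>K. - a K)"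
    unfolding jacobi_theta_def a_def[symmetric]
    by (intro infsum_reindex_bij_witness[of UNIV "\<lambda>K. - 1 - K" "\<lambda>K. - 1 - K"]) auto
  also have "\<dots> = - jacobi_theta t w"
    unfolding jacobi_theta_def a_def by (rule infsum_uminus)
  finally show ?thesis
    by (simp add: w_def)
qed

lemma jacobi_theta_uniform_limit:
  assumes "Im t > 0"
  shows "uniform_limit (cball 0 R) (\<lambda>X u. \<Sum>K\<in>X. ee (of_int K ^ 2 * t / 2 + of_int K * u))
           (jacobi_theta t) (finite_subsets_at_top UNIV)"
  unfolding jacobi_theta_def
proof (rule Weierstrass_m_test_general)
  show "(\<lambda>K::int. exp (- (pi * Im t) * of_int K ^ 2 + (2 * pi * R) * of_int \<bar>K\<bar>)) summable_on UNIV"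
    using assms by (intro summable_on_exp_gaussian_int) simp
  show "norm (ee (of_int K ^ 2 * t / 2 + of_int K * u))
      \<le> exp (- (pi * Im t) * of_int K ^ 2 + (2 * pi * R) * of_int \<bar>K\<bar>)" if "u \<in> cball 0 R" for K u
  proof -
    have "\<bar>Im u\<bar> \<le> R"
      using that abs_Im_le_cmod[of u] by simp
    have "- (Im u * of_int K) \<le> \<bar>Im u\<bar> * \<bar>of_int K\<bar>"
      by (metis abs_ge_minus_self abs_mult)
    also have "\<dots> \<le> R * of_int \<bar>K\<bar>"
      using \<open>\<bar>Im u\<bar> \<le> R\<close> by (simp add: mult_right_mono)
    finally have "pi * - (Im u * of_int K) \<le> pi * (R * of_int \<bar>K\<bar>)"
      by (intro mult_left_mono) auto
    thus ?thesis
      by (simp add: norm_ee power2_eq_square algebra_simps)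
  qed
qed

lemma holomorphic_jacobi_theta:
  assumes "Im t > 0"
  shows "jacobi_theta t holomorphic_on UNIV"
proof -
  have "jacobi_theta t holomorphic_on ball 0 R" for R
    by (rule holomorphic_uniform_limit[OF _ jacobi_theta_uniform_limit[OF assms]])
       (auto simp: ee_def intro!: always_eventually holomorphic_intros continuous_intros)
  hence "jacobi_theta t field_differentiable at u" for u
    using holomorphic_on_imp_differentiable_at[of _ "ball 0 (norm u + 1)" u] by simp
  thus ?thesis
    by (simp add: holomorphic_on_def field_differentiable_at_within)
qed

lemma contour_integral_jacobi_theta_term:
  "contour_integral (linepath 0 1) (\<lambda>u. ee (of_int K ^ 2 * t / 2 + of_int K * u)) = of_bool (K = 0)"
proof (cases "K = 0")
  case False
  define P where "P u = ee (of_int K ^ 2 * t / 2 + of_int K * u) / (2 * of_real pi * \<i> * of_int K)" for u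
  have "(P has_field_derivative ee (of_int K ^ 2 * t / 2 + of_int K * u)) (at u within UNIV)" for u
    unfolding P_def ee_def using False by (auto intro!: derivative_eq_intros)
  hence "((\<lambda>u. ee (of_int K ^ 2 * t / 2 + of_int K * u)) has_contour_integral P 1 - P 0) (linepath 0 1)"
    using contour_integral_primitive[of UNIV P "\<lambda>u. ee (of_int K ^ 2 * t / 2 + of_int K * u)" "linepath 0 1"]
    by simp
  moreover have "P 1 = P 0"
    using ee_add_of_int[of "of_int K ^ 2 * t / 2" K] by (simp add: P_def)
  ultimately show ?thesis
    using False contour_integral_unique by fastforce
qed (simp add: ee_def)

lemma contour_integral_jacobi_theta:
  assumes "Im t > 0"
  shows "contour_integral (linepath 0 1) (jacobi_theta t) = 1"
proof -
  define a where "a = (\<lambda>K u. ee (of_int K ^ 2 * t / 2 + of_int K * u))"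
  define F where "F = finite_subsets_at_top (UNIV :: int set)"
  have cont: "continuous_on A (a K)" for A K
    unfolding a_def ee_def by (intro continuous_intros)
  have "uniform_limit (closed_segment 0 1) (\<lambda>X u. \<Sum>K\<in>X. a K u) (jacobi_theta t) F"
    unfolding F_def a_def
    by (rule uniform_limit_on_subset[OF jacobi_theta_uniform_limit[OF assms, of 1]])
       (auto simp: closed_segment_eq_real_ivl1 dest!: segment_bound1)
  hence "((\<lambda>X. contour_integral (linepath 0 1) (\<lambda>u. \<Sum>K\<in>X. a K u))
          \<longlongrightarrow> contour_integral (linepath 0 1) (jacobi_theta t)) F"
    by (intro contour_integral_uniform_limit(2))
       (auto simp: F_def intro!: always_eventually contour_integrable_continuous_linepath continuous_on_sum cont)
  moreover have "\<forall>\<^sub>F X in F. contour_integral (linepath 0 1) (\<lambda>u. \<Sum>K\<in>X. a K u) = 1"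
    unfolding F_def eventually_finite_subsets_at_top
  proof (intro exI[of _ "{0}"] conjI allI impI)
    fix X :: "int set"
    assume X: "finite X \<and> {0} \<subseteq> X \<and> X \<subseteq> UNIV"
    hence "contour_integral (linepath 0 1) (\<lambda>u. \<Sum>K\<in>X. a K u) = (\<Sum>K\<in>X. of_bool (K = 0))"
      by (subst contour_integral_sum)
         (auto intro: contour_integrable_continuous_linepath cont[unfolded a_def]
            simp: a_def contour_integral_jacobi_theta_term)
    thus "contour_integral (linepath 0 1) (\<lambda>u. \<Sum>K\<in>X. a K u) = 1"
      using X by simp
  qed auto
  hence "((\<lambda>X. contour_integral (linepath 0 1) (\<lambda>u. \<Sum>K\<in>X. a K u)) \<longlongrightarrow> 1) F"
    by (rule tendsto_eventually)
  ultimately show ?thesis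
    using tendsto_unique by (force simp: F_def)
qed

lemma jacobi_theta_not_constant:
  assumes "Im t > 0"
  shows "\<not> jacobi_theta t constant_on UNIV"
proof
  assume "jacobi_theta t constant_on UNIV"
  then obtain c where "\<And>u. jacobi_theta t u = c"
    unfolding constant_on_def by blast
  hence "jacobi_theta t = (\<lambda>_. 0)"
    using jacobi_theta_half_period[of t] by auto
  thus False
    using contour_integral_jacobi_theta[OF assms] by simp
qed

context
  fixes t :: complex
  assumes t: "Im t > 0"
begin

lemma has_field_derivative_jacobi_theta: "(jacobi_theta t has_field_derivative deriv (jacobi_theta t) x) (at x)"
  using holomorphic_derivI[OF holomorphic_jacobi_theta[OF t] open_UNIV UNIV_I] by simp

lemma deriv_jacobi_theta_add_of_int: "deriv (jacobi_theta t) (u + of_int m) = deriv (jacobi_theta t) u"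
proof -
  note der = has_field_derivative_jacobi_theta
  have "((\<lambda>x. jacobi_theta t (x + of_int m)) has_field_derivative deriv (jacobi_theta t) (u + of_int m)) (at u)"
    using der[of "u + of_int m"] by (simp add: DERIV_shift)
  thus ?thesis
    using der[of u] DERIV_unique by (simp add: jacobi_theta_add_of_int)
qed

lemma deriv_jacobi_theta_add_period:
  "deriv (jacobi_theta t) (u + t)
     = ee (- u - t / 2) * (deriv (jacobi_theta t) u - 2 * of_real pi * \<i> * jacobi_theta t u)"
proof -
  note der = has_field_derivative_jacobi_theta
  have "((\<lambda>x. jacobi_theta t (x + t)) has_field_derivative deriv (jacobi_theta t) (u + t)) (at u)"
    using der[of "u + t"] by (simp add: DERIV_shift)
  moreover have "((\<lambda>x. ee (- x - t / 2) * jacobi_theta t x) has_field_derivative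
      ee (- u - t / 2) * (deriv (jacobi_theta t) u - 2 * of_real pi * \<i> * jacobi_theta t u)) (at u)"
    unfolding ee_def by (auto intro!: derivative_eq_intros der[unfolded ee_def] simp: algebra_simps)
  ultimately show ?thesis
    using DERIV_unique by (simp add: jacobi_theta_add_period)
qed

lemma jacobi_theta_nonzero_on_rectpath:
  assumes re: "\<And>u. jacobi_theta t u = 0 \<Longrightarrow> Re u \<noteq> a"
    and im: "\<And>u. jacobi_theta t u = 0 \<Longrightarrow> Im u \<noteq> y"
    and z: "z \<in> path_image (rectpath (Complex a y) (Complex (a + 1) (y + Im t)))"
  shows "jacobi_theta t z \<noteq> 0"
proof
  assume "jacobi_theta t z = 0"
  \<comment> \<open>by periodicity, a zero on the right or top side would give one on the left or bottom side\<close>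
  hence "jacobi_theta t (z + of_int (- 1)) = 0" "jacobi_theta t (z + of_int 0 + of_int (- 1) * t) = 0"
    by (simp_all only: jacobi_theta_add_of_int jacobi_theta_lattice_shift_eq_0_iff)
  thus False
    using z t re[of z] im[of z] re[of "z + of_int (- 1)"] im[of "z + of_int 0 + of_int (- 1) * t"]
      \<open>jacobi_theta t z = 0\<close> by (auto simp: path_image_rectpath)
qed

lemma jacobi_theta_zorder_sum_box:
  assumes re: "\<And>u. jacobi_theta t u = 0 \<Longrightarrow> Re u \<noteq> a"
    and im: "\<And>u. jacobi_theta t u = 0 \<Longrightarrow> Im u \<noteq> y"
  defines "Z \<equiv> {p\<in>box (Complex a y) (Complex (a + 1) (y + Im t)). jacobi_theta t p = 0}"
  shows "finite Z" and "(\<Sum>p\<in>Z. zorder (jacobi_theta t) p) = 1"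
proof -
  let ?f = "jacobi_theta t"
  let ?R = "rectpath (Complex a y) (Complex (a + 1) (y + Im t))"
  define G where "G = (\<lambda>z. deriv ?f z / ?f z)"
  have le: "Re (Complex a y) \<le> Re (Complex (a + 1) (y + Im t))" "Im (Complex a y) \<le> Im (Complex (a + 1) (y + Im t))"
    using t by simp_all
  note AP = argument_principle_rectpath[OF holomorphic_jacobi_theta[OF t] jacobi_theta_not_constant[OF t] le
      jacobi_theta_nonzero_on_rectpath[OF re im]]
  show "finite Z"
    using AP(1) by (simp add: Z_def)
  have "continuous_on A ?f" "continuous_on A (deriv ?f)" for A
    using holomorphic_jacobi_theta[OF t] holomorphic_deriv[OF holomorphic_jacobi_theta[OF t] open_UNIV]
    by (auto intro: holomorphic_on_imp_continuous_on holomorphic_on_subset)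
  hence "continuous_on ({z. Im z = y} \<union> path_image ?R) G"
    unfolding G_def using im jacobi_theta_nonzero_on_rectpath[OF re im] by (intro continuous_intros) auto
  moreover have "G (z + t) = G z + - 2 * of_real pi * \<i>" if "Im z = y" for z
  proof -
    have "?f z \<noteq> 0"
      using im[of z] that by auto
    thus ?thesis
      unfolding G_def jacobi_theta_add_period deriv_jacobi_theta_add_period by (simp add: field_simps)
  qed
  ultimately have "contour_integral ?R G = - (- 2 * of_real pi * \<i>)"
    by (intro contour_integral_rectpath_quasiperiodic)
       (simp_all add: G_def jacobi_theta_add_of_int deriv_jacobi_theta_add_of_int)
  hence "2 * pi * \<i> * (\<Sum>p\<in>Z. of_int (zorder ?f p)) = 2 * pi * \<i>"
    using AP(2) by (simp add: G_def Z_def)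
  hence "(of_int (\<Sum>p\<in>Z. zorder ?f p) :: complex) = 1"
    by simp
  thus "(\<Sum>p\<in>Z. zorder ?f p) = 1"
    by (metis of_int_eq_1_iff)
qed

lemma jacobi_theta_zero_in_box:
  assumes "jacobi_theta t w = 0"
    and re: "\<And>u. jacobi_theta t u = 0 \<Longrightarrow> Re u \<noteq> a"
    and im: "\<And>u. jacobi_theta t u = 0 \<Longrightarrow> Im u \<noteq> y"
  obtains m n :: int where "w + of_int m + of_int n * t \<in> box (Complex a y) (Complex (a + 1) (y + Im t))"
proof -
  define n where "n = \<lfloor>(Im w - y) / Im t\<rfloor>"
  define m where "m = \<lfloor>Re w - of_int n * Re t - a\<rfloor>"
  define w' where "w' = w + of_int (- m) + of_int (- n) * t"
  have "jacobi_theta t w' = 0"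
    unfolding w'_def jacobi_theta_lattice_shift_eq_0_iff by (fact assms(1))
  hence "Re w' \<noteq> a" "Im w' \<noteq> y"
    using re im by blast+
  moreover have "of_int n * Im t \<le> Im w - y" "Im w - y < of_int n * Im t + Im t"
    using t floor_divide_lower[OF t, of "Im w - y"] floor_divide_upper[OF t, of "Im w - y"]
    by (simp_all add: n_def algebra_simps)
  moreover have "of_int m \<le> Re w - of_int n * Re t - a" "Re w - of_int n * Re t - a < of_int m + 1"
    unfolding m_def by linarith+
  ultimately have "w' \<in> box (Complex a y) (Complex (a + 1) (y + Im t))"
    by (auto simp: in_box_complex_iff w'_def algebra_simps)
  thus ?thesis
    using that[of "- m" "- n"] by (simp add: w'_def)
qed

lemma exists_lines_avoiding_jacobi_theta_zeros:
  obtains a y where "a \<notin> Re ` {z. jacobi_theta t z = 0}" and "y \<notin> Im ` {z. jacobi_theta t z = 0}"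
proof -
  have "countable {z\<in>UNIV. jacobi_theta t z = 0}"
    using holomorphic_countable_zeros[OF holomorphic_jacobi_theta[OF t] open_UNIV connected_UNIV fsigma_UNIV
        jacobi_theta_not_constant[OF t]] .
  hence "countable (Re ` {z. jacobi_theta t z = 0})" "countable (Im ` {z. jacobi_theta t z = 0})"
    by simp_all
  hence "Re ` {z. jacobi_theta t z = 0} \<noteq> UNIV" "Im ` {z. jacobi_theta t z = 0} \<noteq> UNIV"
    using uncountable_UNIV_real by auto
  thus ?thesis
    using that by blast
qed

lemma jacobi_theta_zero_in_box_unique:
  assumes re: "\<And>u. jacobi_theta t u = 0 \<Longrightarrow> Re u \<noteq> a"
    and im: "\<And>u. jacobi_theta t u = 0 \<Longrightarrow> Im u \<noteq> y"
  defines "Z \<equiv> {p\<in>box (Complex a y) (Complex (a + 1) (y + Im t)). jacobi_theta t p = 0}"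
  assumes "p \<in> Z" "q \<in> Z"
  shows "p = q"
proof -
  note count = jacobi_theta_zorder_sum_box[OF re im, folded Z_def]
  \<comment> \<open>zeros have positive order, and the orders add up to 1\<close>
  have "int (card Z) = (\<Sum>p\<in>Z. 1)"
    by simp
  also have "\<dots> \<le> (\<Sum>p\<in>Z. zorder (jacobi_theta t) p)"
    using zorder_pos_entire[OF holomorphic_jacobi_theta[OF t] jacobi_theta_not_constant[OF t]]
    by (intro sum_mono) (force simp: Z_def)
  finally have "card Z \<le> Suc 0"
    using count(2) by simp
  thus ?thesis
    using assms(4,5) card_le_Suc0_iff_eq[OF count(1)] by blast
qed

lemma jacobi_theta_eq_0_iff:
  "jacobi_theta t u = 0 \<longleftrightarrow> (\<exists>m n :: int. u = (1 + t) / 2 + of_int m + of_int n * t)"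
proof
  assume "\<exists>m n :: int. u = (1 + t) / 2 + of_int m + of_int n * t"
  thus "jacobi_theta t u = 0"
    using jacobi_theta_lattice_shift_eq_0_iff jacobi_theta_half_period by auto
next
  assume u: "jacobi_theta t u = 0"
  obtain a y where "a \<notin> Re ` {z. jacobi_theta t z = 0}" "y \<notin> Im ` {z. jacobi_theta t z = 0}"
    by (rule exists_lines_avoiding_jacobi_theta_zeros)
  hence re: "\<And>u. jacobi_theta t u = 0 \<Longrightarrow> Re u \<noteq> a" and im: "\<And>u. jacobi_theta t u = 0 \<Longrightarrow> Im u \<noteq> y"
    by auto
  obtain m n :: int where "(1 + t) / 2 + of_int m + of_int n * t \<in> box (Complex a y) (Complex (a + 1) (y + Im t))"
    using re im by (rule jacobi_theta_zero_in_box[OF jacobi_theta_half_period])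
  moreover obtain m' n' :: int where "u + of_int m' + of_int n' * t \<in> box (Complex a y) (Complex (a + 1) (y + Im t))"
    using re im by (rule jacobi_theta_zero_in_box[OF u])
  ultimately have "u + of_int m' + of_int n' * t = (1 + t) / 2 + of_int m + of_int n * t"
    using jacobi_theta_zero_in_box_unique[OF re im] u jacobi_theta_half_period
    by (simp add: jacobi_theta_lattice_shift_eq_0_iff)
  hence "u = (1 + t) / 2 + of_int (m - m') + of_int (n - n') * t"
    by (simp add: algebra_simps)
  thus "\<exists>m n :: int. u = (1 + t) / 2 + of_int m + of_int n * t"
    by blast
qed

end


section \<open>Zeros of level-one theta functions\<close>

lemma theta_level_one_eq_jacobi_theta:
  assumes "d > 0"
  shows "theta_level d \<tau> 1 \<beta> z
       = ee (\<beta>^2 * \<tau> / (2 * of_nat d) + \<beta> * z / of_nat d) * jacobi_theta (\<tau> / of_nat d) ((z + \<beta> * \<tau>) / of_nat d)"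
proof -
  have "theta_level_term d \<tau> 1 \<beta> z K = ee (\<beta>^2 * \<tau> / (2 * of_nat d) + \<beta> * z / of_nat d)
      * ee (of_int K ^ 2 * (\<tau> / of_nat d) / 2 + of_int K * ((z + \<beta> * \<tau>) / of_nat d))" for K
    unfolding theta_level_term_def ee_add[symmetric] using assms
    by (intro arg_cong[where f = ee]) (simp add: field_simps power2_eq_square)
  hence "theta_level d \<tau> 1 \<beta> z = (\<Sum>\<^sub>\<infinity>K. ee (\<beta>^2 * \<tau> / (2 * of_nat d) + \<beta> * z / of_nat d)
      * ee (of_int K ^ 2 * (\<tau> / of_nat d) / 2 + of_int K * ((z + \<beta> * \<tau>) / of_nat d)))"
    unfolding theta_level_def by (rule infsum_cong)
  thus ?thesis
    unfolding jacobi_theta_def by (simp only: infsum_cmult_right')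
qed

lemma countable_lattice: "countable (lattice d \<tau>)"
proof -
  have "lattice d \<tau> = (\<lambda>(m, n). of_int m * of_nat d + of_int n * \<tau>) ` (UNIV :: (int \<times> int) set)"
    unfolding lattice_def by auto
  thus ?thesis
    by simp
qed

lemma zero_in_lattice: "0 \<in> lattice d \<tau>"
  unfolding lattice_def by (intro CollectI exI[of _ 0]) simp

lemma theta_level_one_eq_0_iff:
  assumes "d > 0" "Im \<tau> > 0"
  shows "theta_level d \<tau> 1 \<beta> z = 0 \<longleftrightarrow> z + \<beta> * \<tau> - (of_nat d + \<tau>) / 2 \<in> lattice d \<tau>"
proof -
  have "Im (\<tau> / of_nat d) > 0"
    using assms by (simp add: Im_divide_of_nat)
  hence "theta_level d \<tau> 1 \<beta> z = 0
      \<longleftrightarrow> (\<exists>m n :: int. (z + \<beta> * \<tau>) / of_nat d = (1 + \<tau> / of_nat d) / 2 + of_int m + of_int n * (\<tau> / of_nat d))"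
    by (simp only: theta_level_one_eq_jacobi_theta[OF assms(1)] jacobi_theta_eq_0_iff mult_eq_0_iff ee_nonzero
        simp_thms)
  also have "\<dots> \<longleftrightarrow> (\<exists>m n :: int. z + \<beta> * \<tau> - (of_nat d + \<tau>) / 2 = of_int m * of_nat d + of_int n * \<tau>)"
  proof -
    have D: "(of_nat d :: complex) \<noteq> 0"
      using assms(1) by simp
    have "((1 + \<tau> / of_nat d) / 2 + of_int m + of_int n * (\<tau> / of_nat d)) * of_nat d
        = (of_nat d + \<tau>) / 2 + of_int m * of_nat d + of_int n * \<tau>" for m n :: int
      using D by (simp add: field_simps)
    thus ?thesis
      using D by (simp add: divide_eq_eq diff_eq_eq add_ac)
  qed
  finally show ?thesis
    unfolding lattice_def by blast
qed

lemma theta_level_one_vanishing_at: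
  assumes "d > 0" "Im \<tau> > 0"
  shows "theta_level d \<tau> 1 (((of_nat d + \<tau>) / 2 - w) / \<tau>) z = 0 \<longleftrightarrow> z - w \<in> lattice d \<tau>"
proof -
  have "\<tau> \<noteq> 0"
    using assms(2) by auto
  thus ?thesis
    unfolding theta_level_one_eq_0_iff[OF assms] by simp
qed

lemma countable_theta_level_one_zero_chars:
  assumes "d > 0" "Im \<tau> > 0"
  shows "countable {\<beta>. theta_level d \<tau> 1 \<beta> w = 0}"
proof -
  have "\<tau> \<noteq> 0"
    using assms(2) by auto
  have "{\<beta>. theta_level d \<tau> 1 \<beta> w = 0} \<subseteq> (\<lambda>x. (x + (of_nat d + \<tau>) / 2 - w) / \<tau>) ` lattice d \<tau>"
  proof
    fix \<beta>
    assume "\<beta> \<in> {\<beta>. theta_level d \<tau> 1 \<beta> w = 0}"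
    hence "w + \<beta> * \<tau> - (of_nat d + \<tau>) / 2 \<in> lattice d \<tau>"
      using theta_level_one_eq_0_iff[OF assms, of \<beta> w] by simp
    moreover have "\<beta> = ((w + \<beta> * \<tau> - (of_nat d + \<tau>) / 2) + (of_nat d + \<tau>) / 2 - w) / \<tau>"
      using \<open>\<tau> \<noteq> 0\<close> by simp
    ultimately show "\<beta> \<in> (\<lambda>x. (x + (of_nat d + \<tau>) / 2 - w) / \<tau>) ` lattice d \<tau>"
      by (rule rev_image_eqI)
  qed
  thus ?thesis
    by (rule countable_subset[OF _ countable_image[OF countable_lattice]])
qed


section \<open>Independence of evaluations of the theta functions\<close>

lemma exists_avoiding_countable_affine:
  fixes B :: "complex set" and c a :: complex
  assumes "countable B" "a \<noteq> 0"
  obtains \<gamma> where "\<gamma> \<notin> B" "c - a * \<gamma> \<notin> B"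
proof -
  have "countable (B \<union> (\<lambda>\<beta>. (c - \<beta>) / a) ` B)"
    using assms(1) by simp
  hence "B \<union> (\<lambda>\<beta>. (c - \<beta>) / a) ` B \<noteq> UNIV"
    using uncountable_UNIV_complex by metis
  then obtain \<gamma> where "\<gamma> \<notin> B" "\<gamma> \<notin> (\<lambda>\<beta>. (c - \<beta>) / a) ` B"
    by blast
  moreover have "\<gamma> = (c - (c - a * \<gamma>)) / a"
    using assms(2) by simp
  ultimately show ?thesis
    using that by blast
qed

lemma theta_level_one_product_in_theta_span:
  fixes b :: "'a \<Rightarrow> complex"
  assumes d: "d > 0" and \<tau>: "Im \<tau> > 0" and W: "finite W" "card W + E = d" "E > 0"
  shows "(\<lambda>z. theta_level d \<tau> 1 (- sum b W - of_nat (E - 1) * \<gamma>) z * theta_level d \<tau> 1 \<gamma> z ^ (E - 1)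
           * (\<Prod>w\<in>W. theta_level d \<tau> 1 (b w) z)) \<in> theta_span d \<tau> d 0"
proof -
  have "theta_level d \<tau> 1 (- sum b W - of_nat (E - 1) * \<gamma>) \<in> theta_span d \<tau> 1 (- sum b W - of_nat (E - 1) * \<gamma>)"
    using theta_level_in_theta_span[of 1 d \<tau> _ 0] by simp
  from theta_span_mult_prod_theta_level_one[OF d _ \<tau> finite_lessThan[of "E - 1"] this, where \<beta> = "\<lambda>_. \<gamma>"]
  have "(\<lambda>z. theta_level d \<tau> 1 (- sum b W - of_nat (E - 1) * \<gamma>) z * theta_level d \<tau> 1 \<gamma> z ^ (E - 1))
      \<in> theta_span d \<tau> E (- sum b W)"
    using W(3) by simp
  from theta_span_mult_prod_theta_level_one[OF d _ \<tau> W(1) this, where \<beta> = b]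
  show ?thesis
    using W(2,3) by (simp add: add.commute)
qed

lemma theta_combination_separating_points:
  fixes Z :: "complex set"
  assumes d: "d > 0" and \<tau>: "Im \<tau> > 0" and Z: "finite Z" "card Z < d" "w0 \<in> Z"
    and incongruent: "\<And>w w'. w \<in> Z \<Longrightarrow> w' \<in> Z \<Longrightarrow> w \<noteq> w' \<Longrightarrow> w - w' \<notin> lattice d \<tau>"
  shows "\<exists>C :: nat \<Rightarrow> complex. (\<forall>w\<in>Z - {w0}. (\<Sum>k<d. C k * theta d (int k) \<tau> w) = 0)
                                \<and> (\<Sum>k<d. C k * theta d (int k) \<tau> w0) \<noteq> 0"
proof -
  define Z' where "Z' = Z - {w0}"
  define E where "E = d - card Z'"
  have "finite Z'" "card Z' = card Z - 1" "card Z > 0"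
    using Z card_gt_0_iff by (auto simp: Z'_def)
  hence E: "E - 1 \<noteq> 0" "card Z' + E = d"
    using Z by (auto simp: E_def)
  define b where "b w = ((of_nat d + \<tau>) / 2 - w) / \<tau>" for w
  define c where "c = (\<Sum>w\<in>Z'. b w)"
  obtain \<gamma> where \<gamma>: "theta_level d \<tau> 1 \<gamma> w0 \<noteq> 0" "theta_level d \<tau> 1 (- c - of_nat (E - 1) * \<gamma>) w0 \<noteq> 0"
    using exists_avoiding_countable_affine[OF countable_theta_level_one_zero_chars[OF d \<tau>, of w0],
        of "of_nat (E - 1)" "- c"] E(1) by auto
  \<comment> \<open>one factor vanishing at each point of \<open>Z'\<close>; the other \<open>E \<ge> 2\<close> factors have generic characteristics
    adding up to \<open>- c\<close>, so none vanishes at \<open>w0\<close> (a single one would have its characteristic forced)\<close>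
  define F where "F = (\<lambda>z. theta_level d \<tau> 1 (- c - of_nat (E - 1) * \<gamma>) z * theta_level d \<tau> 1 \<gamma> z ^ (E - 1)
      * (\<Prod>w\<in>Z'. theta_level d \<tau> 1 (b w) z))"
  have "F \<in> theta_span d \<tau> d 0"
    unfolding F_def c_def using E by (intro theta_level_one_product_in_theta_span[OF d \<tau> \<open>finite Z'\<close>]) auto
  then obtain C where C: "\<And>z. F z = (\<Sum>k<d. C k * theta d (int k) \<tau> z)"
    using theta_span_eq_theta_combination[OF d] by blast
  show ?thesis
  proof (intro exI[of _ C] conjI ballI)
    fix w
    assume "w \<in> Z - {w0}"
    hence "w \<in> Z'" "theta_level d \<tau> 1 (b w) w = 0"
      using theta_level_one_vanishing_at[OF d \<tau>] zero_in_lattice by (simp_all add: Z'_def b_def)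
    thus "(\<Sum>k<d. C k * theta d (int k) \<tau> w) = 0"
      unfolding C[symmetric] F_def using \<open>finite Z'\<close> prod_zero_iff by fastforce
  next
    have "theta_level d \<tau> 1 (b w) w0 \<noteq> 0" if "w \<in> Z'" for w
      using that incongruent[OF Z(3), of w] theta_level_one_vanishing_at[OF d \<tau>, of w w0]
      by (auto simp: Z'_def b_def)
    thus "(\<Sum>k<d. C k * theta d (int k) \<tau> w0) \<noteq> 0"
      unfolding C[symmetric] F_def using \<gamma> \<open>finite Z'\<close> by (simp add: prod_zero_iff)
  qed
qed

lemma theta_evaluations_independent:
  fixes P lam :: "'a \<Rightarrow> complex"
  assumes d: "d > 0" and \<tau>: "Im \<tau> > 0" and A: "finite A" "card A < d" "q0 \<in> A"
    and incongruent: "\<And>q q'. q \<in> A \<Longrightarrow> q' \<in> A \<Longrightarrow> q \<noteq> q' \<Longrightarrow> P q - P q' \<notin> lattice d \<tau>"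
    and relation: "\<And>k. k < d \<Longrightarrow> (\<Sum>q\<in>A. lam q * theta d (int k) \<tau> (P q)) = 0"
  shows "lam q0 = 0"
proof -
  have inj: "inj_on P A"
  proof (rule inj_onI)
    fix q q'
    assume "q \<in> A" "q' \<in> A" "P q = P q'"
    thus "q = q'"
      using incongruent[of q q'] zero_in_lattice by auto
  qed
  have image: "finite (P ` A)" "card (P ` A) < d" "P q0 \<in> P ` A"
    using A card_image_le[of A P] by auto
  have "w - w' \<notin> lattice d \<tau>" if "w \<in> P ` A" "w' \<in> P ` A" "w \<noteq> w'" for w w'
    using that incongruent by blast
  then obtain C where
    C: "\<forall>w\<in>P ` A - {P q0}. (\<Sum>k<d. C k * theta d (int k) \<tau> w) = 0"
       "(\<Sum>k<d. C k * theta d (int k) \<tau> (P q0)) \<noteq> 0"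
    using theta_combination_separating_points[OF d \<tau> image] by blast
  have "0 = (\<Sum>k<d. C k * (\<Sum>q\<in>A. lam q * theta d (int k) \<tau> (P q)))"
    by (simp add: relation)
  also have "\<dots> = (\<Sum>q\<in>A. lam q * (\<Sum>k<d. C k * theta d (int k) \<tau> (P q)))"
    by (simp add: sum_distrib_left sum.swap[of _ A] mult_ac)
  also have "\<dots> = lam q0 * (\<Sum>k<d. C k * theta d (int k) \<tau> (P q0))"
  proof -
    have "lam q * (\<Sum>k<d. C k * theta d (int k) \<tau> (P q)) = 0" if "q \<in> A - {q0}" for q
      using that C(1) inj_on_eq_iff[OF inj, of q q0] A(3) by auto
    hence "(\<Sum>q\<in>A - {q0}. lam q * (\<Sum>k<d. C k * theta d (int k) \<tau> (P q))) = 0"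
      by (intro sum.neutral) blast
    thus ?thesis
      using A(1,3) by (simp add: sum.remove[of _ q0])
  qed
  finally show ?thesis
    using C(2) by simp
qed


section \<open>The points and coefficients of the \<open>F\<^sub>k\<close>\<close>

lemma card_Sset: "card (Sset g) = 2 ^ (g - 1)"
  unfolding Sset_def by (simp add: card_PiE numeral_2_eq_2)

lemma finite_Sset: "finite (Sset g)"
  unfolding Sset_def by (intro finite_PiE) auto

lemma exists_Sset_coefficient_nonzero:
  assumes "\<forall>i\<in>{1..g-1}. (u i, v i) \<noteq> (0, 0)"
  obtains q where "q \<in> Sset g" "cq g T q * (\<Prod>i=1..g-1. u i ^ q i * v i ^ (1 - q i)) \<noteq> (0 :: complex)"
proof
  define q where "q = restrict (\<lambda>i. if u i \<noteq> 0 then 1 else 0 :: nat) {1..g-1}"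
  show "q \<in> Sset g"
    unfolding q_def Sset_def by auto
  have "finite {(i, j). 1 \<le> i \<and> i < j \<and> j \<le> g - 1}"
    by (rule finite_subset[of _ "{1..g-1} \<times> {1..g-1}"]) auto
  hence "cq g T q \<noteq> 0"
    unfolding cq_def by (simp add: prod_zero_iff case_prod_beta)
  moreover have "(\<Prod>i=1..g-1. u i ^ q i * v i ^ (1 - q i)) \<noteq> 0"
    using assms by (auto simp: q_def prod_zero_iff)
  ultimately show "cq g T q * (\<Prod>i=1..g-1. u i ^ q i * v i ^ (1 - q i)) \<noteq> 0"
    by simp
qed

lemma Sset_shifts_incongruent:
  assumes "\<forall>n :: nat \<Rightarrow> int. (\<Sum>i=1..g-1. of_int (n i) * t i) \<in> lattice d tg
             \<longrightarrow> (\<forall>i\<in>{1..g-1}. n i = 0)"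
    and "q \<in> Sset g" "q' \<in> Sset g" "q \<noteq> q'"
  shows "(z + (\<Sum>i=1..g-1. of_nat (q i) * t i)) - (z + (\<Sum>i=1..g-1. of_nat (q' i) * t i)) \<notin> lattice d tg"
proof
  define n where "n i = int (q i) - int (q' i)" for i
  assume "(z + (\<Sum>i=1..g-1. of_nat (q i) * t i)) - (z + (\<Sum>i=1..g-1. of_nat (q' i) * t i)) \<in> lattice d tg"
  hence "(\<Sum>i=1..g-1. of_int (n i) * t i) \<in> lattice d tg"
    by (simp add: n_def sum_subtractf[symmetric] algebra_simps)
  hence "\<forall>i\<in>{1..g-1}. n i = 0"
    using assms(1) by blast
  hence "q i = q' i" if "i \<in> {1..g-1}" for i
    using that by (simp add: n_def)
  hence "q = q'"
    using assms(2,3) unfolding Sset_def by (intro PiE_ext) auto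
  thus False
    using assms(4) by contradiction
qed

theorem proposition5p2:
  fixes g d :: nat and tg :: complex and T :: "nat \<Rightarrow> nat \<Rightarrow> complex" and t :: "nat \<Rightarrow> complex"
  assumes "g \<ge> 2" and "d \<ge> 1" and "d > 2 ^ (g - 1)"
    and "Im tg > 0"
    and "\<forall>i j. T i j = T j i"
    and "\<forall>n :: nat \<Rightarrow> int. (\<Sum>i=1..g-1. of_int (n i) * t i) \<in> lattice d tg
             \<longrightarrow> (\<forall>i\<in>{1..g-1}. n i = 0)"
  shows "\<not> (\<exists>z u v. (\<forall>i\<in>{1..g-1}. (u i, v i) \<noteq> (0, 0)) \<and>
                     (\<forall>k\<in>{0..<int d}. Fk g d tg T t k z u v = 0))"
proof
  assume "\<exists>z u v. (\<forall>i\<in>{1..g-1}. (u i, v i) \<noteq> (0, 0)) \<and> (\<forall>k\<in>{0..<int d}. Fk g d tg T t k z u v = 0)"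
  then obtain z u v where uv: "\<forall>i\<in>{1..g-1}. (u i, v i) \<noteq> (0, 0)"
    and F: "\<And>k. k \<in> {0..<int d} \<Longrightarrow> Fk g d tg T t k z u v = 0"
    by blast
  define lam where "lam q = cq g T q * (\<Prod>i=1..g-1. u i ^ q i * v i ^ (1 - q i))" for q
  define P where "P q = z + (\<Sum>i=1..g-1. of_nat (q i) * t i)" for q
  obtain q0 where q0: "q0 \<in> Sset g" "lam q0 \<noteq> 0"
    unfolding lam_def by (rule exists_Sset_coefficient_nonzero[OF uv])
  have "lam q0 = 0"
  proof (rule theta_evaluations_independent[where A = "Sset g" and P = P and lam = lam])
    show "d > 0" "Im tg > 0" "finite (Sset g)" "card (Sset g) < d"
      using assms(2-4) by (simp_all add: finite_Sset card_Sset)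
    show "P q - P q' \<notin> lattice d tg" if "q \<in> Sset g" "q' \<in> Sset g" "q \<noteq> q'" for q q'
      unfolding P_def using Sset_shifts_incongruent[OF assms(6) that] .
    show "(\<Sum>q\<in>Sset g. lam q * theta d (int k) tg (P q)) = 0" if "k < d" for k
      using F[of "int k"] that unfolding Fk_def lam_def P_def by (simp add: mult_ac)
  qed (fact q0(1))
  with q0(2) show False
    by contradiction
qed

end
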